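(* Let $\mathcal{G}=(V,\mathcal{E},T)$ be a happy temporally connected temporal graph, and let $X$ be a vertex cover of its underlying graph $G_U$ with $|X|=d$. Let $\mathcal{S}$ be a minimum temporal spanner of $\mathcal{G}$ (one with the minimum number of time edges). Then the set of time edges of $\mathcal{S}$ is the union of the time-edge sets of at most $d$ temporal out-trees, each rooted at a vertex of $X$, together with at most one extra time edge incident to each vertex of $V\setminus X$.
   Context: A temporal graph is a triple $\mathcal{G}=(V,\mathcal{E},T)$ with finite vertex set $V$, time edges $\mathcal{E}\subseteq\binom{V}{2}\times\{1,\dots,T\}$ and maximum label $T$; its underlying graph $G_U$ has edge set $\{e:\exists t,(e,t)\in\mathcal{E}\}$. $\mathcal{G}$ is happy if every underlying edge has exactly one label and no two time edges sharing an endpoint have the same label (so time edges and underlying edges can be identified). A temporal path is a sequence of time edges $(e_1,t_1),\dots,(e_r,t_r)$ such that $e_1,\dots,e_r$ form a static path and $t_1<\dots<t_r$. $\mathcal{G}$ is temporally connected if every vertex has a temporal path to every other vertex. A temporal spanner of $\mathcal{G}$ is a temporally connected $(V,\mathcal{E}',T')$ with $\mathcal{E}'\subseteq\mathcal{E}$, $T'\le T$. A temporal out-tree rooted at $r$ (in $\mathcal{G}$) is a temporal subgraph $(V,\mathcal{E}_r,T)$, $\mathcal{E}_r\subseteq\mathcal{E}$, whose underlying graph is a spanning tree of $V$ and in which $r$ has a temporal path to every vertex of $V$. *)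

theory Defs
  imports Main
begin

type_synonym 'v tedge = "'v set \<times> nat"

definition temporal_graph :: "'v set \<Rightarrow> 'v tedge set \<Rightarrow> nat \<Rightarrow> bool" where
  "temporal_graph V E T \<longleftrightarrow> finite V \<and>
     (\<forall>(e,t)\<in>E. e \<subseteq> V \<and> card e = 2 \<and> 1 \<le> t \<and> t \<le> T)"

definition underlying :: "'v tedge set \<Rightarrow> 'v set set" where
  "underlying E = fst ` E"

definition happy :: "'v tedge set \<Rightarrow> bool" where
  "happy E \<longleftrightarrow>
     (\<forall>e\<in>underlying E. \<exists>!t. (e,t) \<in> E) \<and>
     (\<forall>(e,t)\<in>E. \<forall>(e',t')\<in>E. (e,t) \<noteq> (e',t') \<and> e \<inter> e' \<noteq> {} \<longrightarrow> t \<noteq> t')"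

definition temporal_path :: "'v tedge set \<Rightarrow> 'v \<Rightarrow> 'v \<Rightarrow> bool" where
  "temporal_path E u v \<longleftrightarrow> (\<exists>vs ts.
     length vs = Suc (length ts) \<and> distinct vs \<and> hd vs = u \<and> last vs = v \<and>
     sorted_wrt (<) ts \<and>
     (\<forall>i < length ts. ({vs ! i, vs ! Suc i}, ts ! i) \<in> E))"

definition temporally_connected :: "'v set \<Rightarrow> 'v tedge set \<Rightarrow> bool" where
  "temporally_connected V E \<longleftrightarrow>
     (\<forall>u\<in>V. \<forall>v\<in>V. u \<noteq> v \<longrightarrow> temporal_path E u v)"

text \<open>A temporal spanner (V, E', T') with T' \<le> T; we take T' = T, which is no restriction
  since all labels of E' \<subseteq> E are \<le> T and connectivity does not depend on T'.\<close>
definition temporal_spanner :: "'v set \<Rightarrow> 'v tedge set \<Rightarrow> 'v tedge set \<Rightarrow> bool" where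
  "temporal_spanner V E E' \<longleftrightarrow> E' \<subseteq> E \<and> temporally_connected V E'"

definition minimum_temporal_spanner :: "'v set \<Rightarrow> 'v tedge set \<Rightarrow> 'v tedge set \<Rightarrow> bool" where
  "minimum_temporal_spanner V E S \<longleftrightarrow> temporal_spanner V E S \<and>
     (\<forall>S'. temporal_spanner V E S' \<longrightarrow> card S \<le> card S')"

definition static_path :: "'v set set \<Rightarrow> 'v list \<Rightarrow> bool" where
  "static_path F vs \<longleftrightarrow> vs \<noteq> [] \<and> distinct vs \<and>
     (\<forall>i. Suc i < length vs \<longrightarrow> {vs ! i, vs ! Suc i} \<in> F)"

definition connected_graph :: "'v set \<Rightarrow> 'v set set \<Rightarrow> bool" where
  "connected_graph V F \<longleftrightarrow> (\<forall>u\<in>V. \<forall>v\<in>V.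
     \<exists>vs. static_path F vs \<and> set vs \<subseteq> V \<and> hd vs = u \<and> last vs = v)"

definition has_cycle :: "'v set set \<Rightarrow> bool" where
  "has_cycle F \<longleftrightarrow> (\<exists>vs. length vs \<ge> 3 \<and> static_path F vs \<and> {last vs, hd vs} \<in> F)"

definition spanning_tree :: "'v set \<Rightarrow> 'v set set \<Rightarrow> bool" where
  "spanning_tree V F \<longleftrightarrow> (\<forall>e\<in>F. e \<subseteq> V \<and> card e = 2) \<and>
     connected_graph V F \<and> \<not> has_cycle F"

definition temporal_out_tree :: "'v set \<Rightarrow> 'v tedge set \<Rightarrow> 'v \<Rightarrow> 'v tedge set \<Rightarrow> bool" where
  "temporal_out_tree V E r Er \<longleftrightarrow> Er \<subseteq> E \<and> r \<in> V \<and>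
     spanning_tree V (underlying Er) \<and>
     (\<forall>v\<in>V. v \<noteq> r \<longrightarrow> temporal_path Er r v)"

definition vertex_cover :: "'v set \<Rightarrow> 'v set set \<Rightarrow> 'v set \<Rightarrow> bool" where
  "vertex_cover V F X \<longleftrightarrow> X \<subseteq> V \<and> (\<forall>e\<in>F. e \<inter> X \<noteq> {})"

end

theory Submission
  imports Defs
begin

text \<open>
  For a vertex v outside the cover X, the earliest time edge of S at v leads into X. For
  x \<in> X let \<tau>(x) be the latest label of such an earliest edge ending at x. Starting with the
  edge realising \<tau>(x), x reaches every other vertex in S by a journey departing no earlier
  than \<tau>(x), and a foremost out-tree rooted at x keeps all these journeys. The union of the
  out-trees with the earliest edges of the vertices outside X is again temporally connected: a
  vertex u \<notin> X enters the tree of the endpoint x of its earliest edge, and happiness turns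
  the inequality between the two labels into the strict one a journey needs. By minimality
  of S this union is S itself.
\<close>

section \<open>Journeys\<close>

definition journey :: "'v tedge set \<Rightarrow> 'v list \<Rightarrow> nat list \<Rightarrow> bool" where
  "journey S vs ts \<longleftrightarrow> length vs = Suc (length ts) \<and> distinct vs \<and> sorted_wrt (<) ts \<and>
     (\<forall>i < length ts. ({vs ! i, vs ! Suc i}, ts ! i) \<in> S)"

definition journey_after :: "'v tedge set \<Rightarrow> nat \<Rightarrow> 'v \<Rightarrow> 'v \<Rightarrow> bool" where
  "journey_after S \<tau> u w \<longleftrightarrow>
     (\<exists>vs ts. journey S vs ts \<and> hd vs = u \<and> last vs = w \<and> ts \<noteq> [] \<and> \<tau> \<le> hd ts)"

lemma temporal_path_iff_journey:
  "temporal_path S u w \<longleftrightarrow> (\<exists>vs ts. journey S vs ts \<and> hd vs = u \<and> last vs = w)"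
  unfolding temporal_path_def journey_def by blast

lemma not_journey_Nil [simp]: "\<not> journey S [] ts"
  by (simp add: journey_def)

lemma journey_Nil_iff: "journey S vs [] \<longleftrightarrow> (\<exists>v. vs = [v])"
  by (auto simp: journey_def length_Suc_conv)

lemma journey_Cons_iff:
  "journey S (a # vs) (t # ts) \<longleftrightarrow>
     journey S vs ts \<and> a \<notin> set vs \<and> ({a, hd vs}, t) \<in> S \<and> (\<forall>s\<in>set ts. t < s)"
proof (cases vs)
  case Nil
  then show ?thesis by (simp add: journey_def)
next
  case (Cons b vs')
  then show ?thesis by (auto simp: journey_def All_less_Suc2)
qed

lemma journey_snoc_iff:
  "journey S (vs @ [w]) (ts @ [t]) \<longleftrightarrow>
     journey S vs ts \<and> w \<notin> set vs \<and> ({last vs, w}, t) \<in> S \<and> (\<forall>s\<in>set ts. s < t)"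
proof (cases "length vs = Suc (length ts)")
  case True
  then have "last vs = vs ! length ts" by (metis diff_Suc_1 last_conv_nth list.size(3) nat.distinct(1))
  with True have "(\<forall>i < length (ts @ [t]). ({(vs @ [w]) ! i, (vs @ [w]) ! Suc i}, (ts @ [t]) ! i) \<in> S)
      \<longleftrightarrow> ({last vs, w}, t) \<in> S \<and> (\<forall>i < length ts. ({vs ! i, vs ! Suc i}, ts ! i) \<in> S)"
    by (simp add: All_less_Suc nth_append)
  with True show ?thesis by (auto simp: journey_def sorted_wrt_append)
next
  case False
  then show ?thesis by (simp add: journey_def)
qed

lemma journey_after_imp_temporal_path: "journey_after S \<tau> u w \<Longrightarrow> temporal_path S u w"
  unfolding journey_after_def temporal_path_iff_journey by blast

lemma temporal_path_imp_journey_after: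
  assumes "temporal_path S u w" and "u \<noteq> w"
  shows "journey_after S 0 u w"
proof -
  obtain vs ts where j: "journey S vs ts" "hd vs = u" "last vs = w"
    using assms(1) unfolding temporal_path_iff_journey by blast
  with assms(2) have "ts \<noteq> []" by (auto simp: journey_Nil_iff)
  with j show ?thesis unfolding journey_after_def by blast
qed

lemma journey_after_mono: "journey_after S \<tau> u w \<Longrightarrow> S \<subseteq> S' \<Longrightarrow> \<sigma> \<le> \<tau> \<Longrightarrow> journey_after S' \<sigma> u w"
  unfolding journey_after_def journey_def by (blast intro: order.trans)

lemma journey_after_edge:
  assumes "({u, w}, t) \<in> S" "u \<noteq> w" "\<tau> \<le> t"
  shows "journey_after S \<tau> u w"
proof -
  have "journey S [u, w] [t]" using assms by (simp add: journey_Cons_iff journey_Nil_iff)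
  with assms show ?thesis unfolding journey_after_def by fastforce
qed

lemma journey_suffix:
  assumes "journey S vs ts" "ts \<noteq> []" "y \<in> set vs" "y \<noteq> last vs"
  shows "journey_after S (hd ts) y (last vs)"
  using assms
proof (induction vs arbitrary: ts)
  case Nil then show ?case by simp
next
  case (Cons a vs)
  then obtain t ts' where ts: "ts = t # ts'" by (cases ts) auto
  with Cons.prems(1) have j: "journey S vs ts'" and lt: "\<forall>s\<in>set ts'. t < s"
    by (auto simp: journey_Cons_iff)
  show ?case
  proof (cases "y = a")
    case True
    with Cons.prems ts show ?thesis unfolding journey_after_def by fastforce
  next
    case False
    with Cons.prems have y: "y \<in> set vs" and "vs \<noteq> []" by auto
    with Cons.prems(4) have "y \<noteq> last vs" by simp
    then have "ts' \<noteq> []" using j y by (auto simp: journey_Nil_iff)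
    with lt have "t \<le> hd ts'" by (simp add: less_imp_le)
    with Cons.IH[OF j \<open>ts' \<noteq> []\<close> y \<open>y \<noteq> last vs\<close>] \<open>vs \<noteq> []\<close> ts show ?thesis
      by (simp add: journey_after_mono)
  qed
qed

lemma happy_edge_unique_at_vertex:
  assumes "happy E" "(e, t) \<in> E" "(e', t) \<in> E" "v \<in> e" "v \<in> e'"
  shows "e = e'"
  using assms unfolding happy_def by blast

text \<open>Prepending is possible even when the journey departs exactly at time t: its first edge
  then shares b and the label t with {a, b}, so by happiness it is {a, b} itself and a already
  lies on the journey.\<close>

lemma journey_after_prepend_edge:
  assumes "happy E" "S \<subseteq> E" "({a, b}, t) \<in> S" "journey_after S t b w" "w \<noteq> a"
  shows "journey_after S t a w"
proof -
  obtain vs ts where j: "journey S vs ts" "hd vs = b" "last vs = w" "ts \<noteq> []" "t \<le> hd ts"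
    using assms(4) unfolding journey_after_def by blast
  show ?thesis
  proof (cases "a \<in> set vs")
    case True
    with j assms(5) have "journey_after S (hd ts) a w" using journey_suffix[OF j(1,4) True] by simp
    with j(5) show ?thesis by (simp add: journey_after_mono)
  next
    case False
    obtain vs' t0 ts' where vs: "vs = b # vs'" and ts: "ts = t0 # ts'"
      using j(1,2,4) by (cases vs; cases ts) auto
    with j(1) have j': "journey S vs' ts'" "({b, hd vs'}, t0) \<in> S" "\<forall>s\<in>set ts'. t0 < s"
      by (auto simp: journey_Cons_iff)
    then have "vs' \<noteq> []" by auto
    have "t \<noteq> t0"
    proof
      assume "t = t0"
      with j'(2) assms(2,3) have "{a, b} = {b, hd vs'}"
        using happy_edge_unique_at_vertex[OF assms(1), of "{a, b}" t "{b, hd vs'}" b] by auto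
      with False vs \<open>vs' \<noteq> []\<close> show False by (auto simp: doubleton_eq_iff)
    qed
    with j(5) ts j'(3) have "\<forall>s\<in>set ts. t < s" by fastforce
    with j(1) j(2) False assms(3) have "journey S (a # vs) (t # ts)"
      by (simp add: journey_Cons_iff)
    moreover have "last (a # vs) = w" using j(3) vs by simp
    ultimately show ?thesis
      unfolding journey_after_def by (intro exI[of _ "a # vs"] exI[of _ "t # ts"]) simp
  qed
qed


section \<open>Spanning trees from parent maps\<close>

lemma static_path_snoc:
  assumes "static_path F vs" "z \<notin> set vs" "{last vs, z} \<in> F"
  shows "static_path F (vs @ [z])"
proof -
  have "{(vs @ [z]) ! i, (vs @ [z]) ! Suc i} \<in> F" if "Suc i < length (vs @ [z])" for i
  proof (cases "Suc i < length vs")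
    case True
    with assms(1) show ?thesis by (simp add: static_path_def nth_append)
  next
    case False
    with that have "i = length vs - 1" by simp
    with assms(1,3) show ?thesis by (auto simp: static_path_def nth_append last_conv_nth)
  qed
  with assms(1,2) show ?thesis by (simp add: static_path_def)
qed

lemma static_path_take:
  assumes "static_path F vs" "i < length vs"
  shows "static_path F (take (Suc i) vs)"
  using assms by (auto simp: static_path_def)

lemma static_path_of_rtrancl:
  assumes "(u, v) \<in> {(a, b). {a, b} \<in> F}\<^sup>*" "u \<in> V" "\<forall>e\<in>F. e \<subseteq> V"
  shows "\<exists>vs. static_path F vs \<and> set vs \<subseteq> V \<and> hd vs = u \<and> last vs = v"
  using assms(1)
proof (induction rule: rtrancl_induct)
  case base
  with assms(2) show ?case by (intro exI[of _ "[u]"]) (simp add: static_path_def)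
next
  case (step y z)
  then obtain vs where vs: "static_path F vs" "set vs \<subseteq> V" "hd vs = u" "last vs = y" by blast
  then have "vs \<noteq> []" by (simp add: static_path_def)
  have yz: "{y, z} \<in> F" using step.hyps(2) by simp
  show ?case
  proof (cases "z \<in> set vs")
    case True
    then obtain i where i: "i < length vs" "vs ! i = z" by (auto simp: in_set_conv_nth)
    have "set (take (Suc i) vs) \<subseteq> V" using vs(2) by (meson order_trans set_take_subset)
    moreover have "hd (take (Suc i) vs) = u" using vs(3) by simp
    moreover have "last (take (Suc i) vs) = z" using i by (simp add: take_Suc_conv_app_nth)
    ultimately show ?thesis using static_path_take[OF vs(1) i(1)] by blast
  next
    case False
    with static_path_snoc[OF vs(1)] vs yz assms(3) \<open>vs \<noteq> []\<close> show ?thesis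
      by (intro exI[of _ "vs @ [z]"]) auto
  qed
qed

lemma cycle_vertex_two_neighbours:
  assumes "length vs \<ge> 3" "static_path F vs" "{last vs, hd vs} \<in> F" "v \<in> set vs"
  obtains a b where "a \<in> set vs" "b \<in> set vs" "a \<noteq> b" "a \<noteq> v" "b \<noteq> v" "{a, v} \<in> F" "{b, v} \<in> F"
proof -
  have "vs \<noteq> []" using assms(1) by auto
  define n where "n = length vs"
  define nx where "nx i = (if Suc i = n then 0 else Suc i)" for i
  have edge: "{vs ! i, vs ! nx i} \<in> F" if "i < n" for i
  proof (cases "Suc i = n")
    case True
    then have "i = length vs - 1" by (simp add: n_def)
    with \<open>vs \<noteq> []\<close> True have "vs ! i = last vs" "vs ! nx i = hd vs"
      by (auto simp: n_def nx_def last_conv_nth hd_conv_nth)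
    with assms(3) show ?thesis by (simp add: insert_commute)
  next
    case False
    with that assms(2) show ?thesis by (simp add: static_path_def n_def nx_def)
  qed
  obtain j where j: "j < n" "vs ! j = v" using assms(4) by (auto simp: n_def in_set_conv_nth)
  define j0 where "j0 = (if j = 0 then n - 1 else j - 1)"
  have idx: "j0 < n" "nx j < n" "nx j0 = j" "nx j \<noteq> j" "j0 \<noteq> j" "nx j \<noteq> j0"
    using j(1) assms(1) by (auto simp: n_def nx_def j0_def)
  have "distinct vs" using assms(2) by (simp add: static_path_def)
  then have "vs ! nx j \<noteq> vs ! j0" "vs ! nx j \<noteq> v" "vs ! j0 \<noteq> v"
    using idx j by (auto simp: n_def nth_eq_iff_index_eq)
  moreover have "{vs ! nx j, v} \<in> F" "{vs ! j0, v} \<in> F"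
    using edge[OF j(1)] edge[OF idx(1)] idx(3) j(2) by (auto simp: insert_commute)
  moreover have "vs ! nx j \<in> set vs" "vs ! j0 \<in> set vs" using idx(1,2) by (auto simp: n_def)
  ultimately show ?thesis using that by blast
qed

text \<open>A vertex of maximal rank on a cycle has two distinct neighbours there, but each edge at
  it joins it to its parent.\<close>

lemma parent_edges_no_cycle:
  fixes rk :: "'v \<Rightarrow> 'b::linorder"
  assumes "\<And>w. w \<in> W \<Longrightarrow> rk (par w) < rk w"
  shows "\<not> has_cycle ((\<lambda>w. {par w, w}) ` W)"
proof
  assume "has_cycle ((\<lambda>w. {par w, w}) ` W)"
  then obtain vs where cyc: "length vs \<ge> 3" "static_path ((\<lambda>w. {par w, w}) ` W) vs"
      "{last vs, hd vs} \<in> (\<lambda>w. {par w, w}) ` W"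
    unfolding has_cycle_def by blast
  then have "vs \<noteq> []" by auto
  have "Max (rk ` set vs) \<in> rk ` set vs" using \<open>vs \<noteq> []\<close> by simp
  then obtain v where v: "v \<in> set vs" "rk v = Max (rk ` set vs)" by (metis imageE)
  then have v_max: "rk a \<le> rk v" if "a \<in> set vs" for a using that by simp
  have neighbour_is_parent: "a = par v"
    if a: "a \<in> set vs" "a \<noteq> v" "{a, v} \<in> (\<lambda>w. {par w, w}) ` W" for a
  proof -
    obtain w where "w \<in> W" "{a, v} = {par w, w}" using a(3) by blast
    with a(2) have "(w = a \<and> par a = v) \<or> (w = v \<and> par v = a)" by (auto simp: doubleton_eq_iff)
    with assms[OF \<open>w \<in> W\<close>] v_max[OF a(1)] show ?thesis by auto
  qed
  obtain a b where ab: "a \<in> set vs" "b \<in> set vs" "a \<noteq> b" "a \<noteq> v" "b \<noteq> v"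
      "{a, v} \<in> (\<lambda>w. {par w, w}) ` W" "{b, v} \<in> (\<lambda>w. {par w, w}) ` W"
    using cycle_vertex_two_neighbours[OF cyc v(1)] .
  have "a = par v" using neighbour_is_parent[OF ab(1,4,6)] .
  moreover have "b = par v" using neighbour_is_parent[OF ab(2,5,7)] .
  ultimately show False using ab(3) by simp
qed

lemma spanning_tree_parent_edges:
  fixes rk :: "'v \<Rightarrow> nat"
  assumes "r \<in> V" and par: "\<And>w. w \<in> V - {r} \<Longrightarrow> par w \<in> V \<and> par w \<noteq> w \<and> rk (par w) < rk w"
  shows "spanning_tree V ((\<lambda>w. {par w, w}) ` (V - {r}))"
proof -
  define F where "F = (\<lambda>w. {par w, w}) ` (V - {r})"
  define R where "R = {(a, b). {a, b} \<in> F}"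
  have edges: "\<forall>e\<in>F. e \<subseteq> V \<and> card e = 2"
  proof
    fix e assume "e \<in> F"
    then obtain w where w: "w \<in> V - {r}" "e = {par w, w}" by (auto simp: F_def)
    with par[OF w(1)] show "e \<subseteq> V \<and> card e = 2" by auto
  qed
  have root: "(r, w) \<in> R\<^sup>*" if "w \<in> V" for w
    using that
  proof (induction "rk w" arbitrary: w rule: less_induct)
    case less
    show ?case
    proof (cases "w = r")
      case False
      with less.prems have w: "w \<in> V - {r}" by simp
      then have "(par w, w) \<in> R" by (auto simp: R_def F_def)
      moreover have "(r, par w) \<in> R\<^sup>*" using less.hyps par[OF w] by blast
      ultimately show ?thesis by (rule rtrancl_into_rtrancl[rotated])
    qed simp
  qed
  have "sym R" by (auto simp: R_def sym_def insert_commute)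
  then have "sym (R\<^sup>*)" by (rule sym_rtrancl)
  have "connected_graph V F"
    unfolding connected_graph_def
  proof (intro ballI)
    fix u v assume "u \<in> V" "v \<in> V"
    with root \<open>sym (R\<^sup>*)\<close> have "(u, v) \<in> R\<^sup>*" by (meson rtrancl_trans symD)
    from static_path_of_rtrancl[OF this[unfolded R_def] \<open>u \<in> V\<close>] edges
    show "\<exists>vs. static_path F vs \<and> set vs \<subseteq> V \<and> hd vs = u \<and> last vs = v" by blast
  qed
  moreover have "\<not> has_cycle F" unfolding F_def using par by (intro parent_edges_no_cycle[where rk = rk]) blast
  ultimately show ?thesis using edges by (simp add: spanning_tree_def F_def)
qed


section \<open>Foremost out-trees\<close>

lemma sorted_wrt_less_le_last: "sorted_wrt (<) xs \<Longrightarrow> x \<in> set xs \<Longrightarrow> x \<le> last (xs :: 'a::order list)"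
  by (induction xs) (auto simp: less_imp_le)

lemma journey_after_parent_edges:
  assumes par: "\<And>w. w \<in> W \<Longrightarrow> \<tau> \<le> arr w \<and> (par w = x \<or> (par w \<in> W \<and> arr (par w) < arr w))"
    and "x \<notin> W" "w \<in> W"
  shows "journey_after ((\<lambda>w. ({par w, w}, arr w)) ` W) \<tau> x w"
proof -
  let ?F = "(\<lambda>w. ({par w, w}, arr w)) ` W"
  \<comment> \<open>the last conjunct keeps w off the journey that reaches its parent\<close>
  have "\<exists>vs ts. journey ?F vs ts \<and> hd vs = x \<and> last vs = w \<and> ts \<noteq> [] \<and> \<tau> \<le> hd ts \<and>
      last ts = arr w \<and> (\<forall>y\<in>set vs. y \<noteq> x \<longrightarrow> arr y \<le> arr w)"
    using \<open>w \<in> W\<close>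
  proof (induction "arr w" arbitrary: w rule: less_induct)
    case less
    have edge: "({par w, w}, arr w) \<in> ?F" using less.prems by blast
    consider "par w = x" | "par w \<in> W" "arr (par w) < arr w" using par[OF less.prems] by blast
    then show ?case
    proof cases
      case 1
      with edge \<open>x \<notin> W\<close> less.prems have "journey ?F [x, w] [arr w]"
        by (auto simp: journey_Cons_iff journey_Nil_iff)
      with par[OF less.prems] show ?thesis by (intro exI[of _ "[x, w]"] exI[of _ "[arr w]"]) auto
    next
      case 2
      then obtain vs ts where j: "journey ?F vs ts" "hd vs = x" "last vs = par w" "ts \<noteq> []"
          "\<tau> \<le> hd ts" "last ts = arr (par w)" "\<forall>y\<in>set vs. y \<noteq> x \<longrightarrow> arr y \<le> arr (par w)"
        using less.hyps by blast
      have "w \<notin> set vs" using j(7) 2(2) \<open>x \<notin> W\<close> less.prems by fastforce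
      moreover have "\<forall>s\<in>set ts. s < arr w"
        using j(1,6) 2(2) sorted_wrt_less_le_last[of ts] by (fastforce simp: journey_def)
      ultimately have "journey ?F (vs @ [w]) (ts @ [arr w])"
        using j(1,3) edge by (simp add: journey_snoc_iff)
      moreover have "hd (vs @ [w]) = x" using j(1,2) by (cases vs) auto
      moreover have "\<forall>y\<in>set (vs @ [w]). y \<noteq> x \<longrightarrow> arr y \<le> arr w" using j(7) 2(2) by force
      ultimately show ?thesis using j(4,5) by (intro exI[of _ "vs @ [w]"] exI[of _ "ts @ [arr w]"]) auto
    qed
  qed
  then show ?thesis unfolding journey_after_def by blast
qed

definition foremost_arrival :: "'v tedge set \<Rightarrow> nat \<Rightarrow> 'v \<Rightarrow> 'v \<Rightarrow> nat" where
  "foremost_arrival S \<tau> x w =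
     Min {last ts | vs ts. journey S vs ts \<and> hd vs = x \<and> last vs = w \<and> ts \<noteq> [] \<and> \<tau> \<le> hd ts}"

lemma journey_labels_in: "journey S vs ts \<Longrightarrow> set ts \<subseteq> snd ` S"
  unfolding journey_def by (force simp: in_set_conv_nth)

lemma foremost_arrival_Min:
  assumes "finite S"
  shows foremost_arrival_le: "\<lbrakk>journey S vs ts; hd vs = x; last vs = w; ts \<noteq> []; \<tau> \<le> hd ts\<rbrakk>
      \<Longrightarrow> foremost_arrival S \<tau> x w \<le> last ts"
    and foremost_arrival_attained: "journey_after S \<tau> x w \<Longrightarrow> \<exists>vs ts. journey S vs ts \<and> hd vs = x \<and>
      last vs = w \<and> ts \<noteq> [] \<and> \<tau> \<le> hd ts \<and> last ts = foremost_arrival S \<tau> x w"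
proof -
  let ?A = "{last ts | vs ts. journey S vs ts \<and> hd vs = x \<and> last vs = w \<and> ts \<noteq> [] \<and> \<tau> \<le> hd ts}"
  have "?A \<subseteq> snd ` S" using journey_labels_in by fastforce
  with assms have "finite ?A" by (rule finite_surj)
  then show "\<lbrakk>journey S vs ts; hd vs = x; last vs = w; ts \<noteq> []; \<tau> \<le> hd ts\<rbrakk>
      \<Longrightarrow> foremost_arrival S \<tau> x w \<le> last ts"
    unfolding foremost_arrival_def by (intro Min_le) blast+
  assume "journey_after S \<tau> x w"
  then have "?A \<noteq> {}" unfolding journey_after_def by blast
  with \<open>finite ?A\<close> have "Min ?A \<in> ?A" by (rule Min_in)
  then obtain vs ts where "journey S vs ts" "hd vs = x" "last vs = w" "ts \<noteq> []" "\<tau> \<le> hd ts"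
      "last ts = Min ?A"
    by auto
  then show "\<exists>vs ts. journey S vs ts \<and> hd vs = x \<and>
      last vs = w \<and> ts \<noteq> [] \<and> \<tau> \<le> hd ts \<and> last ts = foremost_arrival S \<tau> x w"
    unfolding foremost_arrival_def by blast
qed

lemma foremost_parent:
  assumes "finite S" "journey_after S \<tau> x w"
  obtains p where "({p, w}, foremost_arrival S \<tau> x w) \<in> S" "p \<noteq> w" "\<tau> \<le> foremost_arrival S \<tau> x w"
    "p = x \<or> (journey_after S \<tau> x p \<and> foremost_arrival S \<tau> x p < foremost_arrival S \<tau> x w)"
proof -
  obtain vs ts where j: "journey S vs ts" "hd vs = x" "last vs = w" "ts \<noteq> []" "\<tau> \<le> hd ts"
      "last ts = foremost_arrival S \<tau> x w"
    using foremost_arrival_attained[OF assms] by blast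
  obtain ts0 t where ts: "ts = ts0 @ [t]" using j(4) by (cases ts rule: rev_cases) auto
  moreover obtain vs0 where vs: "vs = vs0 @ [w]"
    using j(1,3) by (cases vs rule: rev_cases) auto
  ultimately have j0: "journey S vs0 ts0" "w \<notin> set vs0" "({last vs0, w}, t) \<in> S" "\<forall>s\<in>set ts0. s < t"
    using j(1) by (simp_all add: journey_snoc_iff)
  then have "vs0 \<noteq> []" by auto
  have t: "t = foremost_arrival S \<tau> x w" using j(6) ts by simp
  show ?thesis
  proof (cases "ts0 = []")
    case True
    with j0(1) j(2) vs have "last vs0 = x" by (auto simp: journey_Nil_iff)
    show ?thesis
    proof (rule that)
      show "({x, w}, foremost_arrival S \<tau> x w) \<in> S" using j0(3) \<open>last vs0 = x\<close> t by simp
      show "x \<noteq> w" using j0(2) \<open>last vs0 = x\<close> \<open>vs0 \<noteq> []\<close> by auto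
      show "\<tau> \<le> foremost_arrival S \<tau> x w" using j(5) ts True t by simp
    qed simp
  next
    case False
    with j0(4) have "hd ts0 < t" by simp
    with j ts vs False \<open>vs0 \<noteq> []\<close> have "\<tau> \<le> t" "hd ts0 = hd ts" "hd vs0 = x" by auto
    with j0(1) j(5) False have "journey_after S \<tau> x (last vs0)" unfolding journey_after_def by metis
    moreover have "foremost_arrival S \<tau> x (last vs0) \<le> last ts0"
      using foremost_arrival_le[OF assms(1) j0(1) \<open>hd vs0 = x\<close> refl False] \<open>hd ts0 = hd ts\<close> j(5)
      by simp
    moreover have "last ts0 < t" using j0(4) False by simp
    moreover have "last vs0 \<noteq> w" using j0(2) \<open>vs0 \<noteq> []\<close> by auto
    ultimately show ?thesis using that[of "last vs0"] j0(3) t \<open>\<tau> \<le> t\<close> by auto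
  qed
qed

lemma foremost_out_tree:
  assumes "finite S" "x \<in> V" "\<forall>f\<in>S. fst f \<subseteq> V" "\<forall>w\<in>V - {x}. journey_after S \<tau> x w"
  obtains F where "F \<subseteq> S" "spanning_tree V (underlying F)" "\<forall>w\<in>V - {x}. journey_after F \<tau> x w"
proof -
  let ?arr = "foremost_arrival S \<tau> x"
  have "\<exists>p. ({p, w}, ?arr w) \<in> S \<and> p \<noteq> w \<and> \<tau> \<le> ?arr w \<and>
      (p = x \<or> (journey_after S \<tau> x p \<and> ?arr p < ?arr w))" if "w \<in> V - {x}" for w
    using that assms(4) by (blast elim: foremost_parent[OF assms(1)])
  then obtain par where par: "\<And>w. w \<in> V - {x} \<Longrightarrow> ({par w, w}, ?arr w) \<in> S \<and> par w \<noteq> w \<and>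
      \<tau> \<le> ?arr w \<and> (par w = x \<or> (journey_after S \<tau> x (par w) \<and> ?arr (par w) < ?arr w))"
    by metis
  have par_V: "par w \<in> V" if "w \<in> V - {x}" for w using par[OF that] assms(3) by fastforce
  have par_W: "par w = x \<or> (par w \<in> V - {x} \<and> ?arr (par w) < ?arr w)" if "w \<in> V - {x}" for w
    using par[OF that] par_V[OF that] by blast
  define F where "F = (\<lambda>w. ({par w, w}, ?arr w)) ` (V - {x})"
  have "F \<subseteq> S" using par by (auto simp: F_def)
  moreover have "spanning_tree V (underlying F)"
  proof -
    define rk where "rk y = (if y = x then 0 else Suc (?arr y))" for y
    have "underlying F = (\<lambda>w. {par w, w}) ` (V - {x})"
      by (simp add: underlying_def F_def image_image)
    moreover have "par w \<in> V \<and> par w \<noteq> w \<and> rk (par w) < rk w" if "w \<in> V - {x}" for w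
      using par[OF that] par_V[OF that] par_W[OF that] that by (auto simp: rk_def)
    ultimately show ?thesis using spanning_tree_parent_edges[OF assms(2)] by metis
  qed
  moreover have "journey_after F \<tau> x w" if "w \<in> V - {x}" for w
    unfolding F_def using par par_W that by (intro journey_after_parent_edges) auto
  ultimately show ?thesis using that by blast
qed


section \<open>Earliest edges outside the cover\<close>

definition earliest_label :: "'v tedge set \<Rightarrow> 'v \<Rightarrow> nat" where
  "earliest_label S v = Min {t. \<exists>e. (e, t) \<in> S \<and> v \<in> e}"

definition earliest_edges :: "'v tedge set \<Rightarrow> 'v \<Rightarrow> 'v tedge set" where
  "earliest_edges S v = {f \<in> S. v \<in> fst f \<and> snd f = earliest_label S v}"

text \<open>By time collection_time S Y x, every vertex of Y whose earliest edge leads to x has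
  used it; a journey leaving x no earlier can therefore be prefixed by any of these edges.\<close>

definition collection_time :: "'v tedge set \<Rightarrow> 'v set \<Rightarrow> 'v \<Rightarrow> nat" where
  "collection_time S Y x =
     Max (insert 0 {earliest_label S v | v. v \<in> Y \<and> ({v, x}, earliest_label S v) \<in> S})"

lemma earliest_label_Min:
  assumes "finite S" "(e, t) \<in> S" "v \<in> e"
  shows earliest_label_le: "earliest_label S v \<le> t"
    and earliest_label_attained: "\<exists>e'. (e', earliest_label S v) \<in> S \<and> v \<in> e'"
proof -
  have "{t. \<exists>e. (e, t) \<in> S \<and> v \<in> e} \<subseteq> snd ` S" by force
  with assms(1) have "finite {t. \<exists>e. (e, t) \<in> S \<and> v \<in> e}" by (rule finite_surj)
  with assms(2,3) show "earliest_label S v \<le> t" "\<exists>e'. (e', earliest_label S v) \<in> S \<and> v \<in> e'"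
    unfolding earliest_label_def using Min_in[of "{t. \<exists>e. (e, t) \<in> S \<and> v \<in> e}"]
    by (blast intro: Min_le, auto)
qed

lemma card_earliest_edges_le_1:
  assumes "happy E" "S \<subseteq> E"
  shows "card (earliest_edges S v) \<le> 1"
proof -
  have "f = g" if "f \<in> earliest_edges S v" "g \<in> earliest_edges S v" for f g
  proof -
    from that assms(2) have "(fst f, earliest_label S v) \<in> E" "(fst g, earliest_label S v) \<in> E"
      unfolding earliest_edges_def by (metis (mono_tags, lifting) mem_Collect_eq prod.collapse subsetD)+
    moreover from that have "v \<in> fst f" "v \<in> fst g" by (simp_all add: earliest_edges_def)
    ultimately have "fst f = fst g" by (rule happy_edge_unique_at_vertex[OF assms(1)])
    with that show ?thesis by (simp add: earliest_edges_def prod_eq_iff)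
  qed
  then show ?thesis by (cases "finite (earliest_edges S v)") (auto simp: card_le_Suc0_iff_eq)
qed

lemma journey_after_first_edge: "journey_after S \<tau> u w \<Longrightarrow> \<exists>v t. ({u, v}, t) \<in> S"
  unfolding journey_after_def by (metis journey_Cons_iff list.collapse not_journey_Nil)

lemma journey_after_earliest_label:
  assumes "finite S" "journey_after S \<tau> u w"
  shows "journey_after S (earliest_label S u) u w"
proof -
  obtain vs ts where j: "journey S vs ts" "hd vs = u" "last vs = w" "ts \<noteq> []"
    using assms(2) unfolding journey_after_def by blast
  then obtain vs' ts' where "vs = u # vs'" "ts = hd ts # ts'" by (metis list.collapse not_journey_Nil)
  with j(1) have "({u, hd vs'}, hd ts) \<in> S" by (metis journey_Cons_iff)
  with assms(1) have "earliest_label S u \<le> hd ts" by (rule earliest_label_le) simp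
  with j show ?thesis unfolding journey_after_def by blast
qed

lemma collection_time_Max:
  assumes "finite S"
  shows collection_time_ge: "\<lbrakk>v \<in> Y; ({v, x}, earliest_label S v) \<in> S\<rbrakk>
      \<Longrightarrow> earliest_label S v \<le> collection_time S Y x"
    and collection_time_cases: "collection_time S Y x = 0 \<or> (\<exists>v\<in>Y.
      ({v, x}, collection_time S Y x) \<in> S \<and> earliest_label S v = collection_time S Y x)"
proof -
  let ?L = "{earliest_label S v | v. v \<in> Y \<and> ({v, x}, earliest_label S v) \<in> S}"
  have "?L \<subseteq> snd ` S" by force
  with assms have "finite (insert 0 ?L)" using finite_surj by auto
  then show "\<lbrakk>v \<in> Y; ({v, x}, earliest_label S v) \<in> S\<rbrakk> \<Longrightarrow> earliest_label S v \<le> collection_time S Y x"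
    unfolding collection_time_def by (intro Max_ge) auto
  have "collection_time S Y x \<in> insert 0 ?L"
    unfolding collection_time_def using \<open>finite (insert 0 ?L)\<close> by (intro Max_in) auto
  then show "collection_time S Y x = 0 \<or> (\<exists>v\<in>Y.
      ({v, x}, collection_time S Y x) \<in> S \<and> earliest_label S v = collection_time S Y x)"
    by auto
qed

lemma journey_after_collection_time:
  assumes "happy E" "S \<subseteq> E" "finite S" "temporally_connected V S" "Y \<subseteq> V" "x \<in> V - Y"
    and w: "w \<in> V - {x}"
  shows "journey_after S (collection_time S Y x) x w"
  using collection_time_cases[OF assms(3), of Y x]
proof
  assume "collection_time S Y x = 0"
  with assms(4,6) w show ?thesis
    unfolding temporally_connected_def by (auto intro: temporal_path_imp_journey_after)
next
  assume "\<exists>v\<in>Y. ({v, x}, collection_time S Y x) \<in> S \<and> earliest_label S v = collection_time S Y x"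
  then obtain v where v: "v \<in> Y" "({x, v}, collection_time S Y x) \<in> S"
      "earliest_label S v = collection_time S Y x"
    by (auto simp: insert_commute)
  with assms(5,6) have "v \<in> V" "v \<noteq> x" by auto
  show ?thesis
  proof (cases "w = v")
    case True
    with v(2) \<open>v \<noteq> x\<close> show ?thesis by (auto intro: journey_after_edge)
  next
    case False
    with assms(4) w \<open>v \<in> V\<close> have "journey_after S 0 v w"
      unfolding temporally_connected_def by (auto intro: temporal_path_imp_journey_after)
    with assms(3) v(3) have "journey_after S (collection_time S Y x) v w"
      by (metis journey_after_earliest_label)
    with assms(1,2) v(2) w show ?thesis by (auto intro: journey_after_prepend_edge)
  qed
qed


section \<open>Minimum spanners\<close>

lemma temporal_graph_edge: "temporal_graph V E T \<Longrightarrow> (e, t) \<in> E \<Longrightarrow> e \<subseteq> V \<and> card e = 2"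
  unfolding temporal_graph_def by blast

lemma temporal_graph_finite_edges:
  assumes "temporal_graph V E T"
  shows "finite E"
proof -
  from assms have "E \<subseteq> Pow V \<times> {..T}" "finite V" unfolding temporal_graph_def by auto
  then show ?thesis by (meson finite_Pow_iff finite_SigmaI finite_atMost finite_subset)
qed

lemma earliest_edge_into_cover:
  assumes "temporal_graph V E T" "vertex_cover V (underlying E) X" "S \<subseteq> E" "finite S"
    and "(e, t) \<in> S" "u \<in> e" "u \<notin> X"
  obtains x where "x \<in> X" "({u, x}, earliest_label S u) \<in> S"
proof -
  obtain e' where e': "(e', earliest_label S u) \<in> S" "u \<in> e'"
    using earliest_label_attained[OF assms(4-6)] by blast
  with assms(3) have "card e' = 2" using temporal_graph_edge[OF assms(1)] by blast
  then obtain a b where "e' = {a, b}" "a \<noteq> b" by (auto simp: card_2_iff)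
  with e'(2) obtain x where x: "e' = {u, x}" by (auto simp: insert_commute)
  with e' assms(2,3,7) have "x \<in> X" unfolding vertex_cover_def underlying_def by force
  with e' x show ?thesis using that by blast
qed

lemma temporally_connected_trees_earliest_edges:
  assumes "temporal_graph V E T" "happy E" "vertex_cover V (underlying E) X"
    and "S \<subseteq> E" "finite S" "temporally_connected V S"
    and trees: "\<And>x. x \<in> X \<Longrightarrow> F x \<subseteq> S \<and> (\<forall>w\<in>V - {x}. journey_after (F x) (collection_time S (V - X) x) x w)"
  shows "temporally_connected V ((\<Union>x\<in>X. F x) \<union> (\<Union>v\<in>V - X. earliest_edges S v))"
    (is "temporally_connected V ?S'")
  unfolding temporally_connected_def
proof (intro ballI impI)
  fix u w assume uw: "u \<in> V" "w \<in> V" "u \<noteq> w"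
  have "?S' \<subseteq> E" using trees assms(4) by (auto simp: earliest_edges_def)
  show "temporal_path ?S' u w"
  proof (cases "u \<in> X")
    case True
    with trees uw have "journey_after (F u) (collection_time S (V - X) u) u w" by blast
    moreover have "F u \<subseteq> ?S'" using True by blast
    ultimately have "journey_after ?S' (collection_time S (V - X) u) u w"
      by (rule journey_after_mono) simp
    then show ?thesis by (rule journey_after_imp_temporal_path)
  next
    case False
    from assms(6) uw have "journey_after S 0 u w"
      unfolding temporally_connected_def by (auto intro: temporal_path_imp_journey_after)
    then obtain v t where "({u, v}, t) \<in> S" using journey_after_first_edge by metis
    then obtain x where "x \<in> X" and e: "({u, x}, earliest_label S u) \<in> S"
      using earliest_edge_into_cover[OF assms(1,3,4,5) _ insertI1 False] by blast
    with uw False have edge: "({u, x}, earliest_label S u) \<in> ?S'"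
      by (auto simp: earliest_edges_def)
    show ?thesis
    proof (cases "w = x")
      case True
      with uw(3) have "journey_after ?S' 0 u w" using journey_after_edge[OF edge] by simp
      then show ?thesis by (rule journey_after_imp_temporal_path)
    next
      case False
      have "earliest_label S u \<le> collection_time S (V - X) x"
        using collection_time_ge[OF assms(5)] e uw \<open>u \<notin> X\<close> by (simp add: insert_commute)
      moreover have "journey_after (F x) (collection_time S (V - X) x) x w"
        using trees[OF \<open>x \<in> X\<close>] uw False by blast
      moreover have "F x \<subseteq> ?S'" using \<open>x \<in> X\<close> by blast
      ultimately have "journey_after ?S' (earliest_label S u) x w"
        using journey_after_mono by metis
      then have "journey_after ?S' (earliest_label S u) u w"
        using journey_after_prepend_edge[OF assms(2) \<open>?S' \<subseteq> E\<close> edge] uw(3) by blast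
      then show ?thesis by (rule journey_after_imp_temporal_path)
    qed
  qed
qed

lemma minimum_temporal_spanner_no_proper_subspanner:
  assumes "minimum_temporal_spanner V E S" "finite S" "S' \<subseteq> S" "temporally_connected V S'"
  shows "S' = S"
proof -
  from assms(1,3,4) have "card S \<le> card S'"
    unfolding minimum_temporal_spanner_def temporal_spanner_def by blast
  with assms(2,3) show ?thesis using card_seteq by blast
qed

lemma foremost_out_tree_after_collection_time:
  assumes "temporal_graph V E T" "happy E" "S \<subseteq> E" "temporally_connected V S" "X \<subseteq> V" "x \<in> X"
  obtains F where "F \<subseteq> S" "spanning_tree V (underlying F)"
    "\<forall>w\<in>V - {x}. journey_after F (collection_time S (V - X) x) x w"
proof -
  have "finite S" using assms(3) temporal_graph_finite_edges[OF assms(1)] by (rule finite_subset)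
  have SV: "\<forall>f\<in>S. fst f \<subseteq> V"
    using assms(3) temporal_graph_edge[OF assms(1)] by (metis prod.collapse subsetD)
  from assms(5,6) have "x \<in> V" "x \<in> V - (V - X)" by auto
  have "\<forall>w\<in>V - {x}. journey_after S (collection_time S (V - X) x) x w"
    using journey_after_collection_time[OF assms(2,3) \<open>finite S\<close> assms(4) Diff_subset \<open>x \<in> V - (V - X)\<close>]
    by blast
  from foremost_out_tree[OF \<open>finite S\<close> \<open>x \<in> V\<close> SV this] that show ?thesis by blast
qed

lemma minimum_temporal_spanner_trees_earliest_edges:
  assumes "temporal_graph V E T" "happy E" "vertex_cover V (underlying E) X"
    and "minimum_temporal_spanner V E S"
  obtains F where "\<And>x. x \<in> X \<Longrightarrow> temporal_out_tree V E x (F x)"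
    and "S = (\<Union>x\<in>X. F x) \<union> (\<Union>v\<in>V - X. earliest_edges S v)"
proof -
  from assms(4) have "S \<subseteq> E" "temporally_connected V S"
    unfolding minimum_temporal_spanner_def temporal_spanner_def by auto
  have "finite S" using \<open>S \<subseteq> E\<close> temporal_graph_finite_edges[OF assms(1)] by (rule finite_subset)
  have "X \<subseteq> V" using assms(3) unfolding vertex_cover_def by blast
  have "\<exists>F. F \<subseteq> S \<and> spanning_tree V (underlying F) \<and>
      (\<forall>w\<in>V - {x}. journey_after F (collection_time S (V - X) x) x w)" if "x \<in> X" for x
    by (rule foremost_out_tree_after_collection_time[OF assms(1,2) \<open>S \<subseteq> E\<close>
          \<open>temporally_connected V S\<close> \<open>X \<subseteq> V\<close> that]) blast
  then obtain F where F: "\<And>x. x \<in> X \<Longrightarrow> F x \<subseteq> S \<and> spanning_tree V (underlying (F x)) \<and>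
      (\<forall>w\<in>V - {x}. journey_after (F x) (collection_time S (V - X) x) x w)"
    by metis
  let ?S' = "(\<Union>x\<in>X. F x) \<union> (\<Union>v\<in>V - X. earliest_edges S v)"
  have "?S' \<subseteq> S" using F by (auto simp: earliest_edges_def)
  moreover have "temporally_connected V ?S'"
    using temporally_connected_trees_earliest_edges[OF assms(1,2,3) \<open>S \<subseteq> E\<close> \<open>finite S\<close>
        \<open>temporally_connected V S\<close>] F by blast
  ultimately have "?S' = S" by (rule minimum_temporal_spanner_no_proper_subspanner[OF assms(4) \<open>finite S\<close>])
  moreover have "temporal_out_tree V E x (F x)" if "x \<in> X" for x
    unfolding temporal_out_tree_def using F[OF that] that \<open>X \<subseteq> V\<close> \<open>S \<subseteq> E\<close>
    by (blast intro: journey_after_imp_temporal_path)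
  ultimately show ?thesis by (intro that[of F]) simp_all
qed

theorem lemma13:
  fixes V :: "'v set" and E :: "'v tedge set" and T :: nat and X :: "'v set" and d :: nat
    and S :: "'v tedge set"
  assumes "temporal_graph V E T"
    and "happy E"
    and "temporally_connected V E"
    and "vertex_cover V (underlying E) X"
    and "card X = d"
    and "minimum_temporal_spanner V E S"
  shows "\<exists>k roots trees extra.
     k \<le> d \<and>
     (\<forall>i<k. roots i \<in> X \<and> temporal_out_tree V E (roots i) (trees i)) \<and>
     (\<forall>v\<in>V - X. extra v \<subseteq> E \<and> card (extra v) \<le> 1 \<and> (\<forall>f\<in>extra v. v \<in> fst f)) \<and>
     S = (\<Union>i<k. trees i) \<union> (\<Union>v\<in>V - X. extra v)"
proof -
  obtain F where F: "\<And>x. x \<in> X \<Longrightarrow> temporal_out_tree V E x (F x)"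
    and S_eq: "S = (\<Union>x\<in>X. F x) \<union> (\<Union>v\<in>V - X. earliest_edges S v)"
    using minimum_temporal_spanner_trees_earliest_edges[OF assms(1,2,4,6)] by blast
  have "finite X"
    using assms(1,4) finite_subset unfolding temporal_graph_def vertex_cover_def by blast
  then obtain h where h: "bij_betw h {..<d} X"
    using ex_bij_betw_nat_finite assms(5) by (metis atLeast0LessThan)
  then have hX: "h i \<in> X" if "i < d" for i using that by (simp add: bij_betw_apply)
  have "(\<Union>i<d. F (h i)) = (\<Union>x\<in>X. F x)"
    using bij_betw_imp_surj_on[OF h] by (auto simp: image_image)
  moreover from assms(6) have "S \<subseteq> E"
    unfolding minimum_temporal_spanner_def temporal_spanner_def by blast
  then have "earliest_edges S v \<subseteq> E \<and> card (earliest_edges S v) \<le> 1 \<and>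
      (\<forall>f\<in>earliest_edges S v. v \<in> fst f)" for v
    using card_earliest_edges_le_1[OF assms(2)] by (auto simp: earliest_edges_def)
  ultimately show ?thesis using F hX S_eq
    by (intro exI[of _ d] exI[of _ h] exI[of _ "\<lambda>i. F (h i)"] exI[of _ "earliest_edges S"]) auto
qed

end
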